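(* Under the three-receiver coding module below, for any $t>0$, the transmission in any slot from $1$ to $t$ does not involve any packet with index greater than $m(t)+1$, where $m(t)$ is the maximum rank among the three receivers at the beginning of slot $t$.
   Context: A sender broadcasts packets $\mathbf{p}_1,\mathbf{p}_2,\dots$ (indexed by arrival order, vectors over $\mathbb{F}_3$) to three receivers $1,2,3$ over a slotted erasure broadcast channel; each slot it transmits at most one linear combination of arrived packets, each receiver either receives it or suffers an erasure, and perfect feedback gives the sender every receiver's knowledge. The rank of a receiver is the dimension of the space of linear combinations it knows. Receiver $i$ has heard of a packet if it knows some linear combination involving that packet (with nonzero coefficient); $H_i$ is the set of packets it has heard of and $D_i$ the set it has decoded. "Oldest" means smallest index. Coding module: labels $L,N,D$ form a permutation of $\{1,2,3\}$; initially $L=1,N=2,D=3,m=0$. Each slot: let $U=\{\mathbf{p}_1,\dots,\mathbf{p}_m\}$ together with $\mathbf{p}_{m+1}$ if it has arrived, and set $S_1=D_N\cap D_D$, $S_2=D_N\cap(H_D\setminus D_D)$, $S_3=D_N\setminus H_D$, $S_4=D_D\setminus D_N$, $S_5=(H_D\setminus D_D)\setminus D_N$, $S_6=U\setminus(H_D\cup D_N)$. Transmit: Case 1 ($\mathbf{p}_{m+1}$ not arrived): if $S_2,S_4$ both nonempty send the sum of their oldest packets; else if $S_3,S_4$ both nonempty send the sum of their oldest packets; else send the oldest packet of the first nonempty set among $S_5,S_6,S_2,S_3,S_4$; if all are empty send nothing. Case 2 ($\mathbf{p}_{m+1}\in S_1$): send $\mathbf{p}_{m+1}$ plus whatever Case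 1 would send. Case 3 ($\mathbf{p}_{m+1}\in S_2$): send $\mathbf{p}_{m+1}+c\mathbf{p}$ with $\mathbf{p}$ the oldest packet of the first nonempty set among $S_4,S_5,S_6$, where $c=1$ unless $\mathbf{p}\in S_5$, in which case $c\in\{1,2\}$ is chosen so that the combination is innovative to receiver $D$. Case 4 ($\mathbf{p}_{m+1}\in S_3$): send $\mathbf{p}_{m+1}+\mathbf{p}$, $\mathbf{p}$ the oldest packet of the first nonempty set among $S_4,S_5,S_6$. Case 5 ($\mathbf{p}_{m+1}\in S_4$): send $\mathbf{p}_{m+1}+\mathbf{p}$, $\mathbf{p}$ the oldest packet of the first nonempty set among $S_2,S_3,S_6$. (In Cases 3–5, if all listed sets are empty, $\mathbf{p}_{m+1}$ is sent alone.) Case 6 (otherwise): send $\mathbf{p}_{m+1}$. After feedback, update $H_i,D_i$, set $m$ to the maximum rank of the three receivers; among receivers that have decoded all of $\mathbf{p}_1,\dots,\mathbf{p}_m$, label the one with lowest index $L$ (if there is none, assign labels arbitrarily); of the other two receivers, if exactly one has nonempty unsolved set $H_i\setminus D_i$, label it $D$ and the other $N$; otherwise assign $D,N$ arbitrarily. *)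

theory Defs
  imports Main "HOL.Vector_Spaces" "HOL-Library.Function_Algebras"
begin

text \<open>A linear combination of packets p_1, p_2, ... is represented by its coefficient
  vector v :: nat => 'f, where v j is the coefficient of packet p_j (index 0 unused).
  Receivers are 1, 2, 3.  The knowledge of a receiver is the span of the coefficient
  vectors it has received.\<close>

type_synonym 'f cvec = "nat \<Rightarrow> 'f"

definition fscale :: "'f::field \<Rightarrow> 'f cvec \<Rightarrow> 'f cvec" where
  "fscale c v = (\<lambda>i. c * v i)"

lemma vector_space_fscale: "vector_space (fscale :: 'f::field \<Rightarrow> 'f cvec \<Rightarrow> 'f cvec)"
  by unfold_locales (auto simp: fscale_def fun_eq_iff algebra_simps)

abbreviation kspan :: "'f::field cvec set \<Rightarrow> 'f cvec set" where
  "kspan \<equiv> module.span fscale"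

abbreviation rank :: "'f::field cvec set \<Rightarrow> nat" where
  "rank \<equiv> vector_space.dim fscale"

definition maxrank :: "(nat \<Rightarrow> 'f::field cvec set) \<Rightarrow> nat" where
  "maxrank K = max (rank (K 1)) (max (rank (K 2)) (rank (K 3)))"

definition pk :: "nat \<Rightarrow> 'f::field cvec" where
  "pk j = (\<lambda>k. if k = j then 1 else 0)"

definition heard :: "'f::field cvec set \<Rightarrow> nat set" where
  "heard K = {j. 1 \<le> j \<and> (\<exists>v\<in>K. v j \<noteq> 0)}"

definition decoded :: "'f::field cvec set \<Rightarrow> nat set" where
  "decoded K = {j. 1 \<le> j \<and> pk j \<in> K}"

definition unsolved :: "'f::field cvec set \<Rightarrow> nat set" where
  "unsolved K = heard K - decoded K"

text \<open>Oldest packet of a set = smallest index.\<close>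
definition oldest :: "nat set \<Rightarrow> nat" where
  "oldest S = (LEAST j. j \<in> S)"

fun pick :: "nat set list \<Rightarrow> nat option" where
  "pick [] = None"
| "pick (A # As) = (if A \<noteq> {} then Some (oldest A) else pick As)"

text \<open>Labels are a triple (L, N, D).  K is the knowledge of the receivers, m the
  current value of m, a the number of packets arrived so far (p_j has arrived iff j <= a).\<close>

definition labN :: "nat \<times> nat \<times> nat \<Rightarrow> nat" where "labN lab = fst (snd lab)"
definition labD :: "nat \<times> nat \<times> nat \<Rightarrow> nat" where "labD lab = snd (snd lab)"

definition Uset :: "nat \<Rightarrow> nat \<Rightarrow> nat set" where
  "Uset m a = {1..m} \<union> (if Suc m \<le> a then {Suc m} else {})"

definition S1 :: "(nat \<Rightarrow> 'f::field cvec set) \<Rightarrow> nat \<times> nat \<times> nat \<Rightarrow> nat set" where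
  "S1 K lab = decoded (K (labN lab)) \<inter> decoded (K (labD lab))"
definition S2 :: "(nat \<Rightarrow> 'f::field cvec set) \<Rightarrow> nat \<times> nat \<times> nat \<Rightarrow> nat set" where
  "S2 K lab = decoded (K (labN lab)) \<inter> (heard (K (labD lab)) - decoded (K (labD lab)))"
definition S3 :: "(nat \<Rightarrow> 'f::field cvec set) \<Rightarrow> nat \<times> nat \<times> nat \<Rightarrow> nat set" where
  "S3 K lab = decoded (K (labN lab)) - heard (K (labD lab))"
definition S4 :: "(nat \<Rightarrow> 'f::field cvec set) \<Rightarrow> nat \<times> nat \<times> nat \<Rightarrow> nat set" where
  "S4 K lab = decoded (K (labD lab)) - decoded (K (labN lab))"
definition S5 :: "(nat \<Rightarrow> 'f::field cvec set) \<Rightarrow> nat \<times> nat \<times> nat \<Rightarrow> nat set" where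
  "S5 K lab = (heard (K (labD lab)) - decoded (K (labD lab))) - decoded (K (labN lab))"
definition S6 :: "(nat \<Rightarrow> 'f::field cvec set) \<Rightarrow> nat \<times> nat \<times> nat \<Rightarrow> nat \<Rightarrow> nat \<Rightarrow> nat set" where
  "S6 K lab m a = Uset m a - (heard (K (labD lab)) \<union> decoded (K (labN lab)))"

text \<open>What Case 1 sends (None = nothing is sent).\<close>
definition case1 :: "(nat \<Rightarrow> 'f::field cvec set) \<Rightarrow> nat \<times> nat \<times> nat \<Rightarrow> nat \<Rightarrow> nat \<Rightarrow> 'f cvec option" where
  "case1 K lab m a =
     (if S2 K lab \<noteq> {} \<and> S4 K lab \<noteq> {} then Some (pk (oldest (S2 K lab)) + pk (oldest (S4 K lab)))
      else if S3 K lab \<noteq> {} \<and> S4 K lab \<noteq> {} then Some (pk (oldest (S3 K lab)) + pk (oldest (S4 K lab)))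
      else map_option pk (pick [S5 K lab, S6 K lab m a, S2 K lab, S3 K lab, S4 K lab]))"

text \<open>x is an admissible transmission of the coding module in the current slot
  (the only freedom is the choice of c in Case 3).\<close>
definition tx_ok :: "(nat \<Rightarrow> 'f::field cvec set) \<Rightarrow> nat \<times> nat \<times> nat \<Rightarrow> nat \<Rightarrow> nat \<Rightarrow> 'f cvec option \<Rightarrow> bool" where
  "tx_ok K lab m a x =
    (let q = Suc m in
     if \<not> q \<le> a then x = case1 K lab m a
     else if q \<in> S1 K lab then
       x = Some (pk q + (case case1 K lab m a of None \<Rightarrow> 0 | Some v \<Rightarrow> v))
     else if q \<in> S2 K lab then
       (case pick [S4 K lab, S5 K lab, S6 K lab m a] of
          None \<Rightarrow> x = Some (pk q)
        | Some p \<Rightarrow>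
            (if p \<in> S5 K lab then
               (\<exists>c\<in>{1, 2}. x = Some (pk q + fscale c (pk p)) \<and>
                            pk q + fscale c (pk p) \<notin> K (labD lab))
             else x = Some (pk q + pk p)))
     else if q \<in> S3 K lab then
       x = Some (pk q + (case pick [S4 K lab, S5 K lab, S6 K lab m a] of None \<Rightarrow> 0 | Some p \<Rightarrow> pk p))
     else if q \<in> S4 K lab then
       x = Some (pk q + (case pick [S2 K lab, S3 K lab, S6 K lab m a] of None \<Rightarrow> 0 | Some p \<Rightarrow> pk p))
     else x = Some (pk q))"

definition labels_ok :: "(nat \<Rightarrow> 'f::field cvec set) \<Rightarrow> nat \<Rightarrow> nat \<times> nat \<times> nat \<Rightarrow> bool" where
  "labels_ok K m lab =
    (case lab of (l, n, d) \<Rightarrow>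
      {l, n, d} = {1, 2, 3} \<and>
      (let Full = {i \<in> {1, 2, 3}. {1..m} \<subseteq> decoded (K i)} in
        Full \<noteq> {} \<longrightarrow>
          l = (LEAST i. i \<in> Full) \<and>
          ((unsolved (K n) \<noteq> {}) \<noteq> (unsolved (K d) \<noteq> {}) \<longrightarrow> unsolved (K d) \<noteq> {})))"

text \<open>Slots are t = 1, 2, ...; Kn t i is the knowledge of
  receiver i at the beginning of slot t; x t the transmission in slot t; lab t, mv t the
  labels and m at the beginning of slot t; arr t the number of packets arrived by slot t
  (p_j is available in slot t iff j <= arr t); rcv t i says receiver i receives slot t.\<close>
definition coding_run ::
  "(nat \<Rightarrow> nat) \<Rightarrow> (nat \<Rightarrow> nat \<Rightarrow> bool) \<Rightarrow> (nat \<Rightarrow> nat \<Rightarrow> 'f::field cvec set) \<Rightarrow>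
   (nat \<Rightarrow> 'f cvec option) \<Rightarrow> (nat \<Rightarrow> nat \<times> nat \<times> nat) \<Rightarrow> (nat \<Rightarrow> nat) \<Rightarrow> bool" where
  "coding_run arr rcv Kn x lab mv \<longleftrightarrow>
     (\<forall>i. Kn 1 i = kspan {}) \<and> mv 1 = 0 \<and> lab 1 = (1, 2, 3) \<and>
     (\<forall>t\<ge>1.
        tx_ok (Kn t) (lab t) (mv t) (arr t) (x t) \<and>
        (\<forall>i. Kn (Suc t) i = kspan (Kn t i \<union> (if rcv t i then set_option (x t) else {}))) \<and>
        mv (Suc t) = maxrank (Kn (Suc t)) \<and>
        labels_ok (Kn (Suc t)) (mv (Suc t)) (lab (Suc t)))"

end

theory Submission
  imports Defs
begin

text \<open>Call a coefficient vector supported up to B if it involves no packet of index above B.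
  Such vectors form a subspace, so spans preserve the property.  If every receiver's knowledge
  is supported up to m + 1, then all sets S1, ..., S6 lie in {1..m+1}, and every admissible
  transmission, being a combination of p_(m+1) and oldest packets of these sets, is supported
  up to m + 1 as well.  By induction over slots the knowledge stays supported up to m(t) + 1,
  since m(t) never decreases: knowledge spaces only grow and are finitely generated, so their
  ranks only grow.\<close>

interpretation fs: vector_space fscale by (rule vector_space_fscale)

definition supp_le :: "nat \<Rightarrow> 'f::field cvec \<Rightarrow> bool" where
  "supp_le B v \<longleftrightarrow> (\<forall>j. v j \<noteq> 0 \<longrightarrow> j \<le> B)"

lemma supp_le_zero [simp]: "supp_le B 0"
  by (simp add: supp_le_def)

lemma supp_le_pk: "j \<le> B \<Longrightarrow> supp_le B (pk j)"
  by (simp add: supp_le_def pk_def)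

lemma supp_le_add: "supp_le B v \<Longrightarrow> supp_le B w \<Longrightarrow> supp_le B (v + w)"
  unfolding supp_le_def by (metis add.right_neutral plus_fun_apply)

lemma supp_le_fscale: "supp_le B v \<Longrightarrow> supp_le B (fscale c v)"
  by (auto simp: supp_le_def fscale_def)

lemma supp_le_mono: "supp_le B v \<Longrightarrow> B \<le> C \<Longrightarrow> supp_le C v"
  by (auto simp: supp_le_def)

lemma subspace_supp_le: "fs.subspace {v. supp_le B v}"
  unfolding fs.subspace_def by (auto intro: supp_le_add supp_le_fscale)

lemma span_supp_le: "\<forall>w\<in>S. supp_le B w \<Longrightarrow> v \<in> kspan S \<Longrightarrow> supp_le B v"
  using fs.span_minimal[OF _ subspace_supp_le, of S B] by blast

lemma span_span_Un: "kspan (kspan A \<union> X) = kspan (A \<union> X)"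
  by (simp add: fs.span_Un fs.span_span)

lemma rank_le_of_subset:
  assumes "V \<subseteq> W" "W \<subseteq> kspan G" "finite G"
  shows "rank V \<le> rank W"
proof -
  obtain B where B: "B \<subseteq> W" "fs.independent B" "W \<subseteq> kspan B" "card B = rank W"
    by (rule fs.basis_exists)
  have "finite B"
    using fs.independent_span_bound[OF \<open>finite G\<close> B(2)] B(1) assms(2) by blast
  with fs.dim_le_card[of V B] B assms(1) show ?thesis by auto
qed

lemma oldest_in: "A \<noteq> {} \<Longrightarrow> oldest A \<in> A"
  unfolding oldest_def by (metis LeastI ex_in_conv)

lemma oldest_le: "A \<subseteq> {..B} \<Longrightarrow> A \<noteq> {} \<Longrightarrow> oldest A \<le> B"
  using oldest_in by blast

lemma pick_le: "\<forall>A\<in>set As. A \<subseteq> {..B} \<Longrightarrow> pick As = Some p \<Longrightarrow> p \<le> B"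
proof (induction As)
  case (Cons A As)
  show ?case
  proof (cases "A = {}")
    case True
    with Cons show ?thesis by simp
  next
    case False
    with Cons.prems show ?thesis using oldest_le[of A B] by simp
  qed
qed simp

lemma decoded_subset_heard: "decoded K \<subseteq> heard K"
  by (force simp: decoded_def heard_def pk_def)

lemma heard_atMost: "\<forall>v\<in>K. supp_le B v \<Longrightarrow> heard K \<subseteq> {..B}"
  by (auto simp: heard_def supp_le_def)

lemma coding_sets_atMost:
  assumes "\<forall>i. \<forall>v\<in>K i. supp_le (Suc m) v"
  shows "\<forall>A\<in>{S1 K lab, S2 K lab, S3 K lab, S4 K lab, S5 K lab, S6 K lab m a}. A \<subseteq> {..Suc m}"
proof -
  have heard: "heard (K i) \<subseteq> {..Suc m}" for i
    using assms by (simp add: heard_atMost)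
  have "Uset m a \<subseteq> {..Suc m}"
    by (auto simp: Uset_def)
  with heard[of "labN lab"] heard[of "labD lab"] decoded_subset_heard[of "K (labN lab)"]
    decoded_subset_heard[of "K (labD lab)"]
  show ?thesis
    unfolding S1_def S2_def S3_def S4_def S5_def S6_def by auto
qed

lemma pick_supp_le: "\<forall>A\<in>set As. A \<subseteq> {..B} \<Longrightarrow> supp_le B (case pick As of None \<Rightarrow> 0 | Some p \<Rightarrow> pk p)"
  by (auto split: option.split intro: supp_le_pk pick_le)

lemma case1_supp_le:
  assumes "\<forall>i. \<forall>v\<in>K i. supp_le (Suc m) v" "case1 K lab m a = Some v"
  shows "supp_le (Suc m) v"
  using assms(2) coding_sets_atMost[OF assms(1), of lab a]
    pick_le[of "[S5 K lab, S6 K lab m a, S2 K lab, S3 K lab, S4 K lab]" "Suc m"]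
  unfolding case1_def
  by (auto split: if_splits intro!: supp_le_add supp_le_pk oldest_le)

lemma tx_ok_supp_le:
  assumes K: "\<forall>i. \<forall>v\<in>K i. supp_le (Suc m) v"
    and "tx_ok K lab m a x" "x = Some v"
  shows "supp_le (Suc m) v"
proof -
  have S456: "\<forall>A\<in>set [S4 K lab, S5 K lab, S6 K lab m a]. A \<subseteq> {..Suc m}"
    and S236: "\<forall>A\<in>set [S2 K lab, S3 K lab, S6 K lab m a]. A \<subseteq> {..Suc m}"
    using coding_sets_atMost[OF K, of lab a] by simp_all
  have case1: "case1 K lab m a = Some w \<Longrightarrow> supp_le (Suc m) w" for w
    using case1_supp_le[OF K] .
  then have "supp_le (Suc m) (case case1 K lab m a of None \<Rightarrow> 0 | Some w \<Rightarrow> w)"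
    by (auto split: option.split)
  with assms(2,3) case1 pick_le[OF S456] pick_le[OF S236]
    pick_supp_le[OF S456] pick_supp_le[OF S236]
  show ?thesis
    unfolding tx_ok_def Let_def
    by (auto simp del: pick.simps split: if_splits option.splits
        intro!: supp_le_add supp_le_pk supp_le_fscale)
qed

context
  fixes arr :: "nat \<Rightarrow> nat" and rcv :: "nat \<Rightarrow> nat \<Rightarrow> bool"
    and Kn :: "nat \<Rightarrow> nat \<Rightarrow> 'f::field cvec set"
    and x :: "nat \<Rightarrow> 'f cvec option" and lab :: "nat \<Rightarrow> nat \<times> nat \<times> nat"
    and mv :: "nat \<Rightarrow> nat"
  assumes run: "coding_run arr rcv Kn x lab mv"
begin

lemma knowledge_initial: "Kn 1 i = kspan {}"
  using run by (simp add: coding_run_def)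

lemma knowledge_Suc:
  "1 \<le> t \<Longrightarrow> Kn (Suc t) i = kspan (Kn t i \<union> (if rcv t i then set_option (x t) else {}))"
  using run by (simp add: coding_run_def)

lemma transmission_tx_ok: "1 \<le> t \<Longrightarrow> tx_ok (Kn t) (lab t) (mv t) (arr t) (x t)"
  using run by (simp add: coding_run_def)

lemma m_eq_maxrank:
  assumes "1 \<le> t"
  shows "mv t = maxrank (Kn t)"
proof (cases t)
  case (Suc s)
  show ?thesis
  proof (cases "s = 0")
    case True
    have "rank (Kn 1 i) = 0" for i
      using fs.dim_span_eq_card_independent[OF fs.independent_empty] knowledge_initial by simp
    with True Suc run show ?thesis
      by (simp add: coding_run_def maxrank_def)
  next
    case False
    with Suc run show ?thesis
      by (simp add: coding_run_def)
  qed
qed (use assms in simp)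

lemma knowledge_finitely_generated: "1 \<le> t \<Longrightarrow> \<exists>G. finite G \<and> Kn t i = kspan G"
proof (induction t rule: dec_induct)
  case base
  show ?case
    using knowledge_initial by blast
next
  case (step t)
  then obtain G where "finite G" "Kn t i = kspan G"
    by blast
  with knowledge_Suc[OF step.hyps(1)] show ?case
    by (intro exI[of _ "G \<union> (if rcv t i then set_option (x t) else {})"]) (simp add: span_span_Un)
qed

lemma knowledge_subset_Suc: "1 \<le> t \<Longrightarrow> Kn t i \<subseteq> Kn (Suc t) i"
  using knowledge_Suc fs.span_superset by blast

lemma maxrank_mono:
  assumes "1 \<le> s" "s \<le> t"
  shows "maxrank (Kn s) \<le> maxrank (Kn t)"
  using assms(2)
proof (induction t rule: dec_induct)
  case (step t)
  have "1 \<le> t"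
    using assms(1) step.hyps(1) by simp
  have "rank (Kn t i) \<le> rank (Kn (Suc t) i)" for i
  proof -
    obtain G where "finite G" "Kn (Suc t) i = kspan G"
      using knowledge_finitely_generated[of "Suc t" i] by auto
    with knowledge_subset_Suc[OF \<open>1 \<le> t\<close>] show ?thesis
      by (intro rank_le_of_subset) auto
  qed
  then have "maxrank (Kn t) \<le> maxrank (Kn (Suc t))"
    unfolding maxrank_def by (intro max.mono)
  with step.IH show ?case
    by simp
qed simp

lemma knowledge_supp_le: "1 \<le> t \<Longrightarrow> v \<in> Kn t i \<Longrightarrow> supp_le (Suc (mv t)) v"
proof (induction t arbitrary: v i rule: dec_induct)
  case base
  then show ?case
    using knowledge_initial by (simp add: supp_le_def)
next
  case (step t)
  have "mv t \<le> mv (Suc t)"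
    using maxrank_mono[OF step.hyps(1)] m_eq_maxrank step.hyps(1) by simp
  have "supp_le (Suc (mv t)) w" if "x t = Some w" for w
    using tx_ok_supp_le[OF _ transmission_tx_ok[OF step.hyps(1)] that] step.IH by blast
  with step.IH have "\<forall>w\<in>Kn t i \<union> (if rcv t i then set_option (x t) else {}). supp_le (Suc (mv t)) w"
    by auto
  with step.prems knowledge_Suc[OF step.hyps(1)] have "supp_le (Suc (mv t)) v"
    by (auto intro: span_supp_le)
  with \<open>mv t \<le> mv (Suc t)\<close> show ?case
    by (auto intro: supp_le_mono)
qed

lemma transmission_supp_le: "1 \<le> t \<Longrightarrow> x t = Some v \<Longrightarrow> supp_le (Suc (mv t)) v"
  using tx_ok_supp_le[OF _ transmission_tx_ok] knowledge_supp_le by blast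

end

theorem lemma9:
  fixes arr :: "nat \<Rightarrow> nat" and rcv :: "nat \<Rightarrow> nat \<Rightarrow> bool"
    and Kn :: "nat \<Rightarrow> nat \<Rightarrow> ('f::{field,finite}) cvec set"
    and x :: "nat \<Rightarrow> 'f cvec option" and lab :: "nat \<Rightarrow> nat \<times> nat \<times> nat"
    and mv :: "nat \<Rightarrow> nat" and t :: nat
  assumes "card (UNIV :: 'f set) = 3"
    and "mono arr"
    and "coding_run arr rcv Kn x lab mv"
    and "0 < t"
  shows "\<forall>s\<in>{1..t}. \<forall>v j. x s = Some v \<and> v j \<noteq> 0 \<longrightarrow> j \<le> maxrank (Kn t) + 1"
\<comment> \<open>Neither the field size nor the arrival process matters for this bound.\<close>
proof (intro ballI allI impI)
  fix s v j
  assume s: "s \<in> {1..t}" and xs: "x s = Some v \<and> v j \<noteq> 0"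
  have "j \<le> Suc (mv s)"
    using transmission_supp_le[OF assms(3)] s xs by (auto simp: supp_le_def)
  also have "mv s = maxrank (Kn s)"
    using m_eq_maxrank[OF assms(3)] s by simp
  also have "maxrank (Kn s) \<le> maxrank (Kn t)"
    using maxrank_mono[OF assms(3)] s by simp
  finally show "j \<le> maxrank (Kn t) + 1"
    by simp
qed

end
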